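(* Let $\delta'\in(0,1)$ and fix $X\in\mathcal X$. On the event $\mathcal E_{U,m}(\delta')$, for each $i\in[m]$ the map $\theta_i=(U_i,\operatorname{vec}(W_i))\mapsto h(X;\theta_i)$, restricted to $\{U_i:\|U_i-U_i^{(0)}\|_2\le\rho_u/\sqrt m\}\times\{W_i:\|W_i-W_i^{(0)}\|_F\le\rho_w/\sqrt m\}$, is $L_{1,m}(\delta')$-Lipschitz and $L_{2,m}(\delta')$-smooth (its gradient is $L_{2,m}(\delta')$-Lipschitz), where $L_{1,m}(\delta')=\sigma_1\sqrt{1+B_{U,m}(\delta')^2}$ and $L_{2,m}(\delta')=\sigma_2(1+B_{U,m}(\delta')^2)+8\sigma_1\sqrt{1+B_{U,m}(\delta')^2}$, with $B_{U,m}(\delta')=\sqrt d+\sqrt{2\log(m/(2\delta'))}+\rho_u/\sqrt m$.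
   Context: $\mathcal{X}=\{X=(X_1,\dots,X_T)\in\mathbb{R}^{d\times T}:\max_t\|X_t\|_2\le1\}$; each $X$ has a fixed query $q_X\in\mathbb{R}^d$, $\|q_X\|_2\le1$. Softmax $(\sigma_s(z))_t=e^{z_t}/\sum_se^{z_s}$; $a(X;W)=X\sigma_s(X^\top Wq_X)$; $h(X;\theta)=\sigma(U^\top a(X;W))$ for $\theta=(U,\operatorname{vec}(W))$, $U\in\mathbb{R}^d,W\in\mathbb{R}^{d\times d}$. $\sigma:\mathbb{R}\to\mathbb{R}$ twice differentiable with $|\sigma|\le\sigma_0,|\sigma'|\le\sigma_1,|\sigma''|\le\sigma_2$. $m$ even; $\rho_u,\rho_w>0$. Symmetric initialization: for $i\le m/2$, independently, $W_i^{(0)}$ with i.i.d. $\mathcal N(0,1)$ entries, $U_i^{(0)}\sim\mathcal N(0,I_d)$, $c_i^{(0)}$ uniform on $\{\pm1\}$, and $W_{i+m/2}^{(0)}=W_i^{(0)}$, $U_{i+m/2}^{(0)}=U_i^{(0)}$, $c_{i+m/2}^{(0)}=-c_i^{(0)}$. $\mathcal E_{U,m}(\delta')=\{\max_{i\in[m]}\|U_i^{(0)}\|_2\le\sqrt d+\sqrt{2\log(m/(2\delta'))}\}$. Norms on $\theta$ are Euclidean (Frobenius on the $W$ block). *)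

theory Defs
  imports "HOL-Analysis.Analysis"
begin

definition softmax :: "('t::finite \<Rightarrow> real) \<Rightarrow> 't \<Rightarrow> real" where
  "softmax z t = exp (z t) / (\<Sum>s\<in>UNIV. exp (z s))"

text \<open>Attention output a(X;W) = X softmax(X^T W q); X is given by its columns X t.\<close>
definition attn :: "('t::finite \<Rightarrow> real^'d) \<Rightarrow> real^'d \<Rightarrow> real^'d^'d \<Rightarrow> real^'d" where
  "attn X q W = (\<Sum>t\<in>UNIV. softmax (\<lambda>s. X s \<bullet> (W *v q)) t *\<^sub>R X t)"

text \<open>The network h(X;theta) = sigma(U^T a(X;W)), theta = (U, W) with Euclidean/Frobenius norm.\<close>
definition hnet :: "(real \<Rightarrow> real) \<Rightarrow> ('t::finite \<Rightarrow> real^'d) \<Rightarrow> real^'d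
                    \<Rightarrow> (real^'d) \<times> (real^'d^'d) \<Rightarrow> real" where
  "hnet \<sigma> X q \<theta> = \<sigma> (fst \<theta> \<bullet> attn X q (snd \<theta>))"

definition B_U :: "nat \<Rightarrow> nat \<Rightarrow> real \<Rightarrow> real \<Rightarrow> real" where
  "B_U d m \<rho>u \<delta>' = sqrt (real d) + sqrt (2 * ln (real m / (2 * \<delta>'))) + \<rho>u / sqrt (real m)"

definition L1 :: "real \<Rightarrow> real \<Rightarrow> real" where
  "L1 \<sigma>1 B = \<sigma>1 * sqrt (1 + B\<^sup>2)"

definition L2 :: "real \<Rightarrow> real \<Rightarrow> real \<Rightarrow> real" where
  "L2 \<sigma>1 \<sigma>2 B = \<sigma>2 * (1 + B\<^sup>2) + 8 * \<sigma>1 * sqrt (1 + B\<^sup>2)"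

end

theory Submission
  imports Defs
begin

text \<open>
  Write \<open>h = \<sigma> \<circ> f\<close> with \<open>f(U, W) = U \<bullet> a(W)\<close>, where \<open>a(W)\<close> averages the columns of \<open>X\<close>
  under the softmax weights \<open>p(W)\<close>. Along a segment \<open>W + s V\<close> these weights are an exponential
  tilt of \<open>p\<close>, so the derivative of a \<open>p\<close>-average is a \<open>p\<close>-covariance with the tilt direction,
  and a \<open>p\<close>-covariance is bounded by the product of the sup-norms of its arguments. On the
  ball all scores \<open>U \<bullet> X t\<close> are bounded by \<open>B\<close> and all \<open>X t \<bullet> (V q)\<close> by \<open>\<parallel>V\<parallel>\<close>, which gives
  \<open>|\<langle>\<nabla>h(\<theta>), (u, V)\<rangle>| \<le> \<sigma>\<^sub>1 (\<parallel>u\<parallel> + B \<parallel>V\<parallel>) \<le> L\<^sub>1 \<parallel>(u, V)\<parallel>\<close>. For smoothness one differentiates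
  \<open>s \<mapsto> \<langle>\<nabla>h(\<theta> + s d), w\<rangle>\<close>; besides products of such first-order terms, a third mixed central
  moment of the scores appears, and everything is bounded by \<open>L\<^sub>2 \<parallel>d\<parallel> \<parallel>w\<parallel>\<close>.
\<close>

section \<open>Means and covariances under probability weights\<close>

lemma abs_mult_le_mult:
  fixes x y :: real
  assumes "\<bar>x\<bar> \<le> X" "\<bar>y\<bar> \<le> Y"
  shows "\<bar>x * y\<bar> \<le> X * Y"
  unfolding abs_mult using assms by (intro mult_mono) auto

definition wmean :: "('t::finite \<Rightarrow> real) \<Rightarrow> ('t \<Rightarrow> real) \<Rightarrow> real" where
  "wmean p c = (\<Sum>t\<in>UNIV. p t * c t)"

definition wcov :: "('t::finite \<Rightarrow> real) \<Rightarrow> ('t \<Rightarrow> real) \<Rightarrow> ('t \<Rightarrow> real) \<Rightarrow> real" where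
  "wcov p a b = wmean p (\<lambda>t. a t * (b t - wmean p b))"

lemma wmean_const: "sum p UNIV = 1 \<Longrightarrow> wmean p (\<lambda>_. c) = c"
  unfolding wmean_def by (simp add: sum_distrib_right[symmetric])

lemma wmean_diff: "wmean p (\<lambda>t. a t - b t) = wmean p a - wmean p b"
  unfolding wmean_def by (simp add: right_diff_distrib sum_subtractf)

lemma wmean_cmult: "wmean p (\<lambda>t. c * a t) = c * wmean p a"
  unfolding wmean_def by (simp add: sum_distrib_left mult_ac)

lemma wcov_eq_wmean:
  assumes "sum p UNIV = 1"
  shows "wcov p a b = wmean p (\<lambda>t. a t * b t) - wmean p a * wmean p b"
  unfolding wcov_def right_diff_distrib wmean_diff mult.commute[of _ "wmean p b"] wmean_cmult ..

lemma wcov_centered: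
  assumes "sum p UNIV = 1"
  shows "wcov p a b = wmean p (\<lambda>t. (a t - wmean p a) * (b t - wmean p b))"
  using assms unfolding wcov_def left_diff_distrib wmean_diff wmean_cmult
  by (simp add: wmean_const)

lemma wcov_diff_left: "wcov p (\<lambda>t. a t - b t) e = wcov p a e - wcov p b e"
  unfolding wcov_def left_diff_distrib wmean_diff ..

lemma wcov_cmult_left: "wcov p (\<lambda>t. c * a t) e = c * wcov p a e"
  unfolding wcov_def mult.assoc wmean_cmult ..

lemma wcov_const_left: "sum p UNIV = 1 \<Longrightarrow> wcov p (\<lambda>_. c) e = 0"
  unfolding wcov_def wmean_cmult by (simp add: wmean_diff wmean_const)

lemma abs_wmean_le:
  assumes "\<And>t. 0 \<le> p t" "sum p UNIV = 1" and "\<And>t. \<bar>c t\<bar> \<le> C"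
  shows "\<bar>wmean p c\<bar> \<le> C"
proof -
  have "\<bar>wmean p c\<bar> \<le> (\<Sum>t\<in>UNIV. \<bar>p t * c t\<bar>)"
    unfolding wmean_def by (rule sum_abs)
  also have "\<dots> \<le> (\<Sum>t\<in>UNIV. p t * C)"
    using assms(1,3) by (intro sum_mono) (simp add: abs_mult mult_left_mono)
  also have "\<dots> = C"
    using assms(2) by (simp add: sum_distrib_right[symmetric])
  finally show ?thesis .
qed

lemma wmean_mult_square_le:
  assumes "\<And>t. 0 \<le> p t"
  shows "(wmean p (\<lambda>t. a t * b t))\<^sup>2 \<le> wmean p (\<lambda>t. (a t)\<^sup>2) * wmean p (\<lambda>t. (b t)\<^sup>2)"
proof -
  have "(sqrt (p t) * a t) * (sqrt (p t) * b t) = p t * (a t * b t)"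
    and "(sqrt (p t) * c t)\<^sup>2 = p t * (c t)\<^sup>2" for t and c :: "'a \<Rightarrow> real"
    using assms[of t] by (simp_all add: power_mult_distrib mult_ac)
  with Cauchy_Schwarz_ineq_sum[of "\<lambda>t. sqrt (p t) * a t" "\<lambda>t. sqrt (p t) * b t" UNIV]
  show ?thesis unfolding wmean_def by simp
qed

lemma wvar_le:
  assumes "\<And>t. 0 \<le> p t" "sum p UNIV = 1" and "\<And>t. \<bar>a t\<bar> \<le> A"
  shows "wmean p (\<lambda>t. (a t - wmean p a)\<^sup>2) \<le> A\<^sup>2"
proof -
  have "wmean p (\<lambda>t. (a t - wmean p a)\<^sup>2) = wmean p (\<lambda>t. (a t)\<^sup>2) - (wmean p a)\<^sup>2"
    using wcov_centered[OF assms(2), of a a] wcov_eq_wmean[OF assms(2), of a a]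
    by (simp add: power2_eq_square)
  also have "\<dots> \<le> wmean p (\<lambda>t. (a t)\<^sup>2)"
    by simp
  also have "\<dots> \<le> wmean p (\<lambda>_. A\<^sup>2)"
    unfolding wmean_def using assms(1,3)
    by (intro sum_mono mult_left_mono)
      (auto simp: abs_le_square_iff[symmetric] intro: order_trans[OF _ abs_ge_self])
  finally show ?thesis
    using wmean_const[OF assms(2)] by simp
qed

lemma abs_wcov_le:
  assumes p: "\<And>t. 0 \<le> p t" "sum p UNIV = 1" and "\<And>t. \<bar>a t\<bar> \<le> A" "\<And>t. \<bar>b t\<bar> \<le> B"
  shows "\<bar>wcov p a b\<bar> \<le> A * B"
proof -
  have "(wcov p a b)\<^sup>2 \<le> wmean p (\<lambda>t. (a t - wmean p a)\<^sup>2) * wmean p (\<lambda>t. (b t - wmean p b)\<^sup>2)"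
    unfolding wcov_centered[OF p(2)] by (rule wmean_mult_square_le[OF p(1)])
  also have "\<dots> \<le> A\<^sup>2 * B\<^sup>2"
    using assms by (intro mult_mono wvar_le) (auto simp: wmean_def intro!: sum_nonneg)
  finally have "(wcov p a b)\<^sup>2 \<le> (A * B)\<^sup>2"
    by (simp add: power_mult_distrib)
  moreover have "0 \<le> A * B"
    using assms(3,4) by (meson abs_ge_zero order_trans mult_nonneg_nonneg)
  ultimately show ?thesis
    by (metis abs_le_square_iff abs_of_nonneg)
qed

lemma abs_wmean_add_wcov_le:
  assumes "\<And>t. 0 \<le> p t" "sum p UNIV = 1"
    and "\<And>t. \<bar>k t\<bar> \<le> K" "\<And>t. \<bar>y t\<bar> \<le> B" "\<And>t. \<bar>e t\<bar> \<le> E"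
  shows "\<bar>wmean p k + wcov p y e\<bar> \<le> K + B * E"
proof -
  have "\<bar>wmean p k\<bar> \<le> K" by (rule abs_wmean_le[OF assms(1-3)])
  moreover have "\<bar>wcov p y e\<bar> \<le> B * E" by (rule abs_wcov_le[OF assms(1,2,4,5)])
  ultimately show ?thesis by linarith
qed

lemma abs_wcov_centered_mult_le:
  assumes p: "\<And>t. 0 \<le> p t" "sum p UNIV = 1"
    and y: "\<And>t. \<bar>y t\<bar> \<le> B" and e: "\<And>t. \<bar>e t\<bar> \<le> E" and b: "\<And>t. \<bar>b t\<bar> \<le> C"
  shows "\<bar>wcov p (\<lambda>t. (y t - wmean p y) * (e t - wmean p e)) b\<bar> \<le> 2 * B * (2 * E) * C"
proof (rule abs_wcov_le[OF p _ b])
  have "\<bar>wmean p y\<bar> \<le> B" "\<bar>wmean p e\<bar> \<le> E"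
    by (rule abs_wmean_le[OF p y], rule abs_wmean_le[OF p e])
  then have "\<bar>y t - wmean p y\<bar> \<le> 2 * B" "\<bar>e t - wmean p e\<bar> \<le> 2 * E" for t
    using y[of t] e[of t] by linarith+
  then show "\<bar>(y t - wmean p y) * (e t - wmean p e)\<bar> \<le> 2 * B * (2 * E)" for t
    by (intro abs_mult_le_mult)
qed

section \<open>Softmax along a line\<close>

lemma softmax_pos: "0 < softmax z t"
  unfolding softmax_def by (intro divide_pos_pos sum_pos) auto

lemma sum_softmax: "sum (softmax z) UNIV = 1"
proof -
  have "0 < (\<Sum>s\<in>UNIV. exp (z s))"
    by (intro sum_pos) auto
  then show ?thesis
    unfolding softmax_def by (simp add: sum_divide_distrib[symmetric])
qed

lemma softmax_has_derivative:
  fixes z :: "'t::finite \<Rightarrow> 'a::real_normed_vector \<Rightarrow> real"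
  assumes "\<And>s. (z s has_derivative z' s) (at x)"
  shows "((\<lambda>x. softmax (\<lambda>s. z s x) t) has_derivative
           (\<lambda>v. softmax (\<lambda>s. z s x) t * (z' t v - wmean (softmax (\<lambda>s. z s x)) (\<lambda>s. z' s v)))) (at x)"
proof -
  define Z where "Z = (\<Sum>s\<in>UNIV. exp (z s x))"
  have "Z > 0"
    unfolding Z_def by (intro sum_pos) auto
  show ?thesis
    unfolding softmax_def wmean_def
    using assms \<open>Z > 0\<close>
    by (auto intro!: derivative_eq_intros ext
        simp: Z_def[symmetric] field_simps sum_divide_distrib[symmetric] sum_distrib_left)
qed

definition tilted :: "('t::finite \<Rightarrow> real) \<Rightarrow> ('t \<Rightarrow> real) \<Rightarrow> real \<Rightarrow> 't \<Rightarrow> real" where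
  "tilted \<alpha> \<beta> s = softmax (\<lambda>t. \<alpha> t + s * \<beta> t)"

lemma tilted_nonneg: "0 \<le> tilted \<alpha> \<beta> s t"
  unfolding tilted_def using softmax_pos less_imp_le by blast

lemma sum_tilted: "sum (tilted \<alpha> \<beta> s) UNIV = 1"
  unfolding tilted_def by (rule sum_softmax)

lemma has_real_derivative_tilted:
  "((\<lambda>s. tilted \<alpha> \<beta> s t) has_real_derivative tilted \<alpha> \<beta> s t * (\<beta> t - wmean (tilted \<alpha> \<beta> s) \<beta>)) (at s)"
  unfolding tilted_def
  by (rule has_derivative_imp_has_field_derivative[OF softmax_has_derivative[of "\<lambda>t s. \<alpha> t + s * \<beta> t"]])
     (auto intro!: derivative_eq_intros simp: wmean_cmult right_diff_distrib mult_ac)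

lemma has_real_derivative_wmean_tilted:
  assumes "\<And>t. ((\<lambda>s. c s t) has_real_derivative c' t) (at s)"
  shows "((\<lambda>s. wmean (tilted \<alpha> \<beta> s) (c s)) has_real_derivative
           wmean (tilted \<alpha> \<beta> s) c' + wcov (tilted \<alpha> \<beta> s) (c s) \<beta>) (at s)"
proof -
  let ?P = "tilted \<alpha> \<beta> s"
  have "((\<lambda>s. \<Sum>t\<in>UNIV. tilted \<alpha> \<beta> s t * c s t) has_real_derivative
      (\<Sum>t\<in>UNIV. ?P t * (\<beta> t - wmean ?P \<beta>) * c s t + c' t * ?P t)) (at s)"
    by (intro DERIV_sum DERIV_mult has_real_derivative_tilted assms)
  moreover have "(\<Sum>t\<in>UNIV. ?P t * (\<beta> t - wmean ?P \<beta>) * c s t + c' t * ?P t)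
      = wmean ?P c' + wcov ?P (c s) \<beta>"
    unfolding wcov_def wmean_def[of ?P c'] wmean_def[of ?P "\<lambda>t. c s t * _ t"]
    by (simp add: sum.distrib mult_ac)
  ultimately show ?thesis
    unfolding wmean_def[abs_def] by simp
qed

lemma has_real_derivative_wmean_tilted_line:
  "((\<lambda>s. wmean (tilted \<alpha> \<beta> s) (\<lambda>t. \<gamma> t + s * \<eta> t)) has_real_derivative
      wmean (tilted \<alpha> \<beta> s) \<eta> + wcov (tilted \<alpha> \<beta> s) (\<lambda>t. \<gamma> t + s * \<eta> t) \<beta>) (at s)"
  by (rule has_real_derivative_wmean_tilted) (auto intro!: derivative_eq_intros)

lemma has_real_derivative_wcov_tilted_line:
  fixes \<alpha> \<beta> \<gamma> \<eta> \<epsilon> :: "'t::finite \<Rightarrow> real" and s :: real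
  defines "P \<equiv> tilted \<alpha> \<beta> s" and "y \<equiv> \<lambda>t. \<gamma> t + s * \<eta> t"
  shows "((\<lambda>s. wcov (tilted \<alpha> \<beta> s) (\<lambda>t. \<gamma> t + s * \<eta> t) \<epsilon>) has_real_derivative
      wcov P \<eta> \<epsilon> + wcov P (\<lambda>t. (y t - wmean P y) * (\<epsilon> t - wmean P \<epsilon>)) \<beta>) (at s)"
proof -
  have P1: "sum P UNIV = 1"
    unfolding P_def by (rule sum_tilted)
  have "((\<lambda>s. wmean (tilted \<alpha> \<beta> s) (\<lambda>t. (\<gamma> t + s * \<eta> t) * \<epsilon> t)) has_real_derivative
      wmean P (\<lambda>t. \<eta> t * \<epsilon> t) + wcov P (\<lambda>t. y t * \<epsilon> t) \<beta>) (at s)"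
    unfolding P_def y_def
    by (rule has_real_derivative_wmean_tilted) (auto intro!: derivative_eq_intros)
  moreover have "((\<lambda>s. wmean (tilted \<alpha> \<beta> s) \<epsilon>) has_real_derivative wcov P \<epsilon> \<beta>) (at s)"
    using has_real_derivative_wmean_tilted[of "\<lambda>s. \<epsilon>" "\<lambda>t. 0" s \<alpha> \<beta>]
    by (simp add: P_def wmean_const[OF sum_tilted])
  ultimately have deriv: "((\<lambda>s. wmean (tilted \<alpha> \<beta> s) (\<lambda>t. (\<gamma> t + s * \<eta> t) * \<epsilon> t)
             - wmean (tilted \<alpha> \<beta> s) (\<lambda>t. \<gamma> t + s * \<eta> t) * wmean (tilted \<alpha> \<beta> s) \<epsilon>)
      has_real_derivative
        (wmean P (\<lambda>t. \<eta> t * \<epsilon> t) + wcov P (\<lambda>t. y t * \<epsilon> t) \<beta>)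
        - ((wmean P \<eta> + wcov P y \<beta>) * wmean P \<epsilon> + wcov P \<epsilon> \<beta> * wmean P y)) (at s)"
    using has_real_derivative_wmean_tilted_line[of \<alpha> \<beta> \<gamma> \<eta> s]
    unfolding P_def y_def by (intro DERIV_diff DERIV_mult)
  have wcov_line: "(\<lambda>s. wcov (tilted \<alpha> \<beta> s) (\<lambda>t. \<gamma> t + s * \<eta> t) \<epsilon>)
      = (\<lambda>s. wmean (tilted \<alpha> \<beta> s) (\<lambda>t. (\<gamma> t + s * \<eta> t) * \<epsilon> t)
             - wmean (tilted \<alpha> \<beta> s) (\<lambda>t. \<gamma> t + s * \<eta> t) * wmean (tilted \<alpha> \<beta> s) \<epsilon>)"
    by (simp add: wcov_eq_wmean[OF sum_tilted])
  have "(\<lambda>t. (y t - wmean P y) * (\<epsilon> t - wmean P \<epsilon>))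
      = (\<lambda>t. (y t * \<epsilon> t - wmean P \<epsilon> * y t) - (wmean P y * \<epsilon> t - wmean P y * wmean P \<epsilon>))"
    by (simp add: fun_eq_iff algebra_simps)
  then have third_moment: "wcov P (\<lambda>t. (y t - wmean P y) * (\<epsilon> t - wmean P \<epsilon>)) \<beta>
      = wcov P (\<lambda>t. y t * \<epsilon> t) \<beta> - wmean P \<epsilon> * wcov P y \<beta> - wmean P y * wcov P \<epsilon> \<beta>"
    by (simp only: wcov_diff_left wcov_cmult_left wcov_const_left[OF P1] diff_zero)
  show ?thesis
    unfolding wcov_line third_moment wcov_eq_wmean[OF P1, of \<eta>]
    by (rule DERIV_cong[OF deriv]) (simp add: algebra_simps)
qed

text \<open>
  Along the segment \<open>(U, W) + s (u, V)\<close>, \<open>F s\<close> is the pre-activation and \<open>\<sigma>' (F s) * \<Psi> s\<close> is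
  the pairing of the gradient with \<open>(wU, wV)\<close>; see \<open>inner_hnet_grad_line\<close>.
\<close>

lemma abs_sigma'_tilted_line_diff_le:
  fixes \<alpha> \<beta> \<gamma> \<eta> \<kappa> \<epsilon> :: "'t::finite \<Rightarrow> real"
  defines "F \<equiv> \<lambda>s. wmean (tilted \<alpha> \<beta> s) (\<lambda>t. \<gamma> t + s * \<eta> t)"
    and "\<Psi> \<equiv> \<lambda>s. wmean (tilted \<alpha> \<beta> s) \<kappa> + wcov (tilted \<alpha> \<beta> s) (\<lambda>t. \<gamma> t + s * \<eta> t) \<epsilon>"
  assumes \<sigma>'_deriv: "\<And>x. (\<sigma>' has_real_derivative \<sigma>'' x) (at x)"
    and \<sigma>'_bound: "\<And>x. \<bar>\<sigma>' x\<bar> \<le> \<sigma>1" and \<sigma>''_bound: "\<And>x. \<bar>\<sigma>'' x\<bar> \<le> \<sigma>2"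
    and \<beta>: "\<And>t. \<bar>\<beta> t\<bar> \<le> b" and \<eta>: "\<And>t. \<bar>\<eta> t\<bar> \<le> h"
    and \<kappa>: "\<And>t. \<bar>\<kappa> t\<bar> \<le> k" and \<epsilon>: "\<And>t. \<bar>\<epsilon> t\<bar> \<le> e"
    and line: "\<And>s t. 0 \<le> s \<Longrightarrow> s \<le> 1 \<Longrightarrow> \<bar>\<gamma> t + s * \<eta> t\<bar> \<le> B"
  shows "\<bar>\<sigma>' (F 1) * \<Psi> 1 - \<sigma>' (F 0) * \<Psi> 0\<bar>
           \<le> \<sigma>2 * (h + B * b) * (k + B * e) + \<sigma>1 * (k * b + h * e + 4 * B * e * b)"
proof -
  note P = tilted_nonneg[of \<alpha> \<beta>] sum_tilted[of \<alpha> \<beta>]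
  define y where "y s t = \<gamma> t + s * \<eta> t" for s t
  define F' where "F' s = wmean (tilted \<alpha> \<beta> s) \<eta> + wcov (tilted \<alpha> \<beta> s) (y s) \<beta>" for s
  define \<Psi>' where "\<Psi>' s = wcov (tilted \<alpha> \<beta> s) \<kappa> \<beta> + (wcov (tilted \<alpha> \<beta> s) \<eta> \<epsilon>
      + wcov (tilted \<alpha> \<beta> s)
          (\<lambda>t. (y s t - wmean (tilted \<alpha> \<beta> s) (y s)) * (\<epsilon> t - wmean (tilted \<alpha> \<beta> s) \<epsilon>)) \<beta>)" for s
  have F_deriv: "(F has_real_derivative F' s) (at s)" for s
    unfolding F_def F'_def y_def by (rule has_real_derivative_wmean_tilted_line)
  have \<Psi>_deriv: "(\<Psi> has_real_derivative \<Psi>' s) (at s)" for s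
  proof -
    have "((\<lambda>s. wmean (tilted \<alpha> \<beta> s) \<kappa>) has_real_derivative wcov (tilted \<alpha> \<beta> s) \<kappa> \<beta>) (at s)"
      using has_real_derivative_wmean_tilted[of "\<lambda>s. \<kappa>" "\<lambda>t. 0" s \<alpha> \<beta>]
      by (simp add: wmean_const[OF sum_tilted])
    then show ?thesis
      unfolding \<Psi>_def \<Psi>'_def y_def by (intro DERIV_add has_real_derivative_wcov_tilted_line)
  qed
  have y_bound: "\<bar>y s t\<bar> \<le> B" if "0 \<le> s" "s \<le> 1" for s t
    unfolding y_def using line that .
  have F'_bound: "\<bar>F' s\<bar> \<le> h + B * b" if "0 \<le> s" "s \<le> 1" for s
    unfolding F'_def by (rule abs_wmean_add_wcov_le[OF P \<eta> y_bound[OF that] \<beta>])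
  have \<Psi>_bound: "\<bar>\<Psi> s\<bar> \<le> k + B * e" if "0 \<le> s" "s \<le> 1" for s
    unfolding \<Psi>_def using abs_wmean_add_wcov_le[OF P \<kappa> y_bound[OF that] \<epsilon>] by (simp add: y_def)
  have \<Psi>'_bound: "\<bar>\<Psi>' s\<bar> \<le> k * b + h * e + 4 * B * e * b" if "0 \<le> s" "s \<le> 1" for s
  proof -
    let ?P = "tilted \<alpha> \<beta> s"
    have "\<bar>wcov ?P \<kappa> \<beta>\<bar> \<le> k * b" "\<bar>wcov ?P \<eta> \<epsilon>\<bar> \<le> h * e"
      by (rule abs_wcov_le[OF P \<kappa> \<beta>], rule abs_wcov_le[OF P \<eta> \<epsilon>])
    moreover have "\<bar>wcov ?P (\<lambda>t. (y s t - wmean ?P (y s)) * (\<epsilon> t - wmean ?P \<epsilon>)) \<beta>\<bar> \<le> 2 * B * (2 * e) * b"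
      by (rule abs_wcov_centered_mult_le[OF P y_bound[OF that] \<epsilon> \<beta>])
    ultimately show ?thesis
      unfolding \<Psi>'_def by linarith
  qed
  define M where "M = \<sigma>2 * (h + B * b) * (k + B * e) + \<sigma>1 * (k * b + h * e + 4 * B * e * b)"
  have "norm (\<sigma>' (F 1) * \<Psi> 1 - \<sigma>' (F 0) * \<Psi> 0) \<le> M * norm (1 - 0 :: real)"
  proof (rule field_differentiable_bound[where S="{0..1}" and f="\<lambda>s. \<sigma>' (F s) * \<Psi> s"])
    show "((\<lambda>s. \<sigma>' (F s) * \<Psi> s) has_field_derivative \<sigma>'' (F s) * F' s * \<Psi> s + \<sigma>' (F s) * \<Psi>' s)
        (at s within {0..1})" for s
      using DERIV_mult[OF DERIV_chain2[OF \<sigma>'_deriv F_deriv] \<Psi>_deriv]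
      by (auto intro: has_field_derivative_at_within simp: mult.commute)
    show "norm (\<sigma>'' (F s) * F' s * \<Psi> s + \<sigma>' (F s) * \<Psi>' s) \<le> M" if "s \<in> {0..1}" for s
    proof -
      have "\<bar>\<sigma>'' (F s) * F' s * \<Psi> s\<bar> \<le> \<sigma>2 * (h + B * b) * (k + B * e)"
        using that by (intro abs_mult_le_mult \<sigma>''_bound F'_bound \<Psi>_bound) auto
      moreover have "\<bar>\<sigma>' (F s) * \<Psi>' s\<bar> \<le> \<sigma>1 * (k * b + h * e + 4 * B * e * b)"
        using that by (intro abs_mult_le_mult \<sigma>'_bound \<Psi>'_bound) auto
      ultimately show ?thesis
        unfolding M_def by simp
    qed
  qed auto
  then show ?thesis
    unfolding M_def by simp
qed

section \<open>The network and its gradient\<close>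

definition outer :: "real^'n \<Rightarrow> real^'m \<Rightarrow> real^'m^'n" where
  "outer x q = (\<chi> i. x$i *\<^sub>R q)"

lemma inner_outer: "outer x q \<bullet> V = x \<bullet> (V *v q)"
  unfolding outer_def inner_vec_def matrix_vector_mult_def
  by (simp add: sum_distrib_left mult_ac)

lemma norm_outer: "norm (outer x q) = norm x * norm q"
proof -
  have "(norm (outer x q))\<^sup>2 = (\<Sum>i\<in>UNIV. (norm (x$i *\<^sub>R q))\<^sup>2)"
    by (subst norm_vec_def) (simp add: L2_set_def outer_def sum_nonneg)
  also have "\<dots> = (\<Sum>i\<in>UNIV. (x$i)\<^sup>2) * (norm q)\<^sup>2"
    by (simp add: sum_distrib_right power_mult_distrib)
  also have "\<dots> = (norm x * norm q)\<^sup>2"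
    by (simp add: power_mult_distrib norm_vec_def L2_set_def sum_nonneg)
  finally show ?thesis
    by (simp add: power2_eq_iff_nonneg)
qed

lemma abs_inner_matrix_vector_mult_le:
  fixes x :: "real^'n" and q :: "real^'m"
  shows "\<bar>x \<bullet> (V *v q)\<bar> \<le> norm x * norm q * norm V"
  using Cauchy_Schwarz_ineq2[of "outer x q" V] by (simp add: inner_outer norm_outer)

lemma abs_inner_le_norm: "norm x \<le> 1 \<Longrightarrow> \<bar>u \<bullet> x\<bar> \<le> norm u"
  using Cauchy_Schwarz_ineq2[of u x] mult_left_mono[of "norm x" 1 "norm u"] by simp

lemma abs_inner_matrix_vector_mult_le_norm:
  fixes x :: "real^'n" and q :: "real^'m"
  shows "norm x \<le> 1 \<Longrightarrow> norm q \<le> 1 \<Longrightarrow> \<bar>x \<bullet> (V *v q)\<bar> \<le> norm V"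
  using abs_inner_matrix_vector_mult_le[of x V q] mult_mono[of "norm x" 1 "norm q" 1]
    mult_right_mono[of "norm x * norm q" 1 "norm V"] by simp

definition attn_weights :: "('t::finite \<Rightarrow> real^'d) \<Rightarrow> real^'d \<Rightarrow> real^'d^'d \<Rightarrow> 't \<Rightarrow> real" where
  "attn_weights X q W = softmax (\<lambda>s. X s \<bullet> (W *v q))"

lemma inner_attn: "u \<bullet> attn X q W = wmean (attn_weights X q W) (\<lambda>t. u \<bullet> X t)"
  unfolding attn_def attn_weights_def wmean_def by (simp add: inner_sum_right)

lemma attn_weights_line:
  "attn_weights X q (W + s *\<^sub>R V) = tilted (\<lambda>t. X t \<bullet> (W *v q)) (\<lambda>t. X t \<bullet> (V *v q)) s"
  unfolding attn_weights_def tilted_def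
  by (simp add: matrix_vector_mult_add_rdistrib scaleR_matrix_vector_assoc[symmetric] inner_add_right)

fun hnet_grad :: "(real \<Rightarrow> real) \<Rightarrow> ('t::finite \<Rightarrow> real^'d) \<Rightarrow> real^'d
                  \<Rightarrow> (real^'d) \<times> (real^'d^'d) \<Rightarrow> (real^'d) \<times> (real^'d^'d)" where
  "hnet_grad \<sigma>' X q (U, W) =
     (let a = attn X q W
      in \<sigma>' (U \<bullet> a) *\<^sub>R (a, \<Sum>t\<in>UNIV. (attn_weights X q W t * (U \<bullet> X t)) *\<^sub>R outer (X t - a) q))"

lemma inner_hnet_grad:
  "hnet_grad \<sigma>' X q (U, W) \<bullet> (u, V) = \<sigma>' (U \<bullet> attn X q W) *
     (wmean (attn_weights X q W) (\<lambda>t. u \<bullet> X t)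
      + wcov (attn_weights X q W) (\<lambda>t. U \<bullet> X t) (\<lambda>t. X t \<bullet> (V *v q)))"
proof -
  have "attn X q W \<bullet> (V *v q) = wmean (attn_weights X q W) (\<lambda>t. X t \<bullet> (V *v q))"
    by (simp add: inner_commute inner_attn)
  then show ?thesis
    unfolding hnet_grad.simps Let_def inner_scaleR_left inner_Pair
    by (simp add: inner_commute[of _ u] inner_attn inner_sum_left inner_outer inner_diff_left
        wcov_def wmean_def mult_ac)
qed

lemma inner_hnet_grad_line:
  fixes X :: "'t::finite \<Rightarrow> real^'d" and q :: "real^'d" and W V :: "real^'d^'d" and s :: real
  defines "P \<equiv> tilted (\<lambda>t. X t \<bullet> (W *v q)) (\<lambda>t. X t \<bullet> (V *v q)) s"
  shows "hnet_grad \<sigma>' X q ((U, W) + s *\<^sub>R (u, V)) \<bullet> (wU, wV) =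
    \<sigma>' (wmean P (\<lambda>t. U \<bullet> X t + s * (u \<bullet> X t))) *
      (wmean P (\<lambda>t. wU \<bullet> X t) + wcov P (\<lambda>t. U \<bullet> X t + s * (u \<bullet> X t)) (\<lambda>t. X t \<bullet> (wV *v q)))"
  using inner_hnet_grad[of \<sigma>' X q "U + s *\<^sub>R u" "W + s *\<^sub>R V" wU wV]
  by (simp add: P_def inner_attn attn_weights_line inner_add_left)

lemma hnet_has_derivative:
  assumes "\<And>x. (\<sigma> has_real_derivative \<sigma>' x) (at x)"
  shows "(hnet \<sigma> X q has_derivative (\<lambda>v. hnet_grad \<sigma>' X q \<theta> \<bullet> v)) (at \<theta>)"
proof -
  obtain U W where \<theta>: "\<theta> = (U, W)"
    by (cases \<theta>)
  let ?p = "attn_weights X q W"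
  have "((\<lambda>\<theta>. attn_weights X q (snd \<theta>) t) has_derivative
      (\<lambda>v. ?p t * (X t \<bullet> (snd v *v q) - wmean ?p (\<lambda>s. X s \<bullet> (snd v *v q))))) (at (U, W))" for t
    using softmax_has_derivative[of "\<lambda>s \<theta>. outer (X s) q \<bullet> snd \<theta>" "\<lambda>s v. outer (X s) q \<bullet> snd v" "(U, W)",
        OF bounded_linear.has_derivative[OF bounded_linear_inner_right has_derivative_snd[OF has_derivative_ident]]]
    by (simp add: attn_weights_def inner_outer)
  then have "((\<lambda>\<theta>. \<Sum>t\<in>UNIV. attn_weights X q (snd \<theta>) t * (fst \<theta> \<bullet> X t)) has_derivative
      (\<lambda>v. wmean ?p (\<lambda>t. fst v \<bullet> X t) + wcov ?p (\<lambda>t. U \<bullet> X t) (\<lambda>t. X t \<bullet> (snd v *v q)))) (at (U, W))"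
    by (auto intro!: derivative_eq_intros ext
        simp: wmean_def wcov_def sum.distrib right_diff_distrib mult_ac simp flip: add_diff_eq)
  then have "((\<lambda>\<theta>. fst \<theta> \<bullet> attn X q (snd \<theta>)) has_derivative
      (\<lambda>v. wmean ?p (\<lambda>t. fst v \<bullet> X t) + wcov ?p (\<lambda>t. U \<bullet> X t) (\<lambda>t. X t \<bullet> (snd v *v q)))) (at (U, W))"
    by (simp add: inner_attn wmean_def mult.commute)
  from DERIV_compose_FDERIV[OF assms this]
  have "(hnet \<sigma> X q has_derivative (\<lambda>v. \<sigma>' (U \<bullet> attn X q W) *
      (wmean ?p (\<lambda>t. fst v \<bullet> X t) + wcov ?p (\<lambda>t. U \<bullet> X t) (\<lambda>t. X t \<bullet> (snd v *v q))))) (at \<theta>)"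
    unfolding hnet_def[abs_def] \<theta> by (simp add: mult.commute)
  moreover have "hnet_grad \<sigma>' X q \<theta> \<bullet> v = \<sigma>' (U \<bullet> attn X q W) *
      (wmean ?p (\<lambda>t. fst v \<bullet> X t) + wcov ?p (\<lambda>t. U \<bullet> X t) (\<lambda>t. X t \<bullet> (snd v *v q)))" for v
    using inner_hnet_grad[of \<sigma>' X q U W "fst v" "snd v"] by (simp add: \<theta>)
  ultimately show ?thesis
    by simp
qed

section \<open>Lipschitz constants\<close>

lemma inner_le_norm_Pair_mult: "a * c + b * d \<le> norm (a, b) * norm (c, d)" for a b c d :: real
  using norm_cauchy_schwarz[of "(a, b)" "(c, d)"] by simp

lemma add_mult_norm_le_norm_Pair:
  "norm u + B * norm V \<le> sqrt (1 + B\<^sup>2) * norm (u, V)"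
  using inner_le_norm_Pair_mult[of 1 "norm u" B "norm V"] by (simp add: norm_Pair)

lemma sigma1_bound_le_L1:
  "0 \<le> \<sigma>1 \<Longrightarrow> \<sigma>1 * (norm u + B * norm V) \<le> L1 \<sigma>1 B * norm (u, V)"
  unfolding L1_def using mult_left_mono[OF add_mult_norm_le_norm_Pair] by (simp add: mult.assoc)

lemma one_add_four_mult_le: "1 + 4 * B \<le> 8 * sqrt (1 + B\<^sup>2)"
proof -
  have "(1 + 4 * B)\<^sup>2 \<le> (8 * sqrt (1 + B\<^sup>2))\<^sup>2"
    using zero_le_power2[of "12 * B - 1"] by (simp add: power_mult_distrib power2_eq_square algebra_simps)
  then show ?thesis
    by (rule power2_le_imp_le) simp
qed

lemma sigma2_sigma1_bound_le_L2:
  assumes "0 \<le> \<sigma>1" "0 \<le> \<sigma>2" "0 \<le> B"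
  shows "\<sigma>2 * (norm u + B * norm V) * (norm wU + B * norm wV)
           + \<sigma>1 * (norm wU * norm V + norm u * norm wV + 4 * B * norm wV * norm V)
         \<le> L2 \<sigma>1 \<sigma>2 B * norm (u, V) * norm (wU, wV)"
proof -
  define r where "r = sqrt (1 + B\<^sup>2)"
  have "(norm u + B * norm V) * (norm wU + B * norm wV) \<le> (r * norm (u, V)) * (r * norm (wU, wV))"
    unfolding r_def using assms(3) by (intro mult_mono add_mult_norm_le_norm_Pair) auto
  also have "\<dots> = (1 + B\<^sup>2) * (norm (u, V) * norm (wU, wV))"
    unfolding r_def by (simp add: mult_ac add_pos_nonneg)
  finally have quadratic: "\<sigma>2 * (norm u + B * norm V) * (norm wU + B * norm wV)
      \<le> \<sigma>2 * (1 + B\<^sup>2) * (norm (u, V) * norm (wU, wV))"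
    using mult_left_mono assms(2) by (simp add: mult.assoc)
  have "norm wU * norm V + norm u * norm wV \<le> norm (u, V) * norm (wU, wV)"
    using inner_le_norm_Pair_mult[of "norm V" "norm wU" "norm u" "norm wV"]
    by (simp add: norm_Pair mult.commute add.commute)
  moreover have "4 * B * (norm wV * norm V) \<le> 4 * B * (norm (u, V) * norm (wU, wV))"
    using assms(3) by (intro mult_left_mono) (simp_all add: mult.commute mult_mono norm_snd_le)
  ultimately have "norm wU * norm V + norm u * norm wV + 4 * B * norm wV * norm V
      \<le> (1 + 4 * B) * (norm (u, V) * norm (wU, wV))"
    unfolding distrib_right mult_1_left by (simp only: mult.assoc)
  also have "\<dots> \<le> 8 * r * (norm (u, V) * norm (wU, wV))"
    unfolding r_def by (intro mult_right_mono one_add_four_mult_le) simp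
  finally have linear: "\<sigma>1 * (norm wU * norm V + norm u * norm wV + 4 * B * norm wV * norm V)
      \<le> \<sigma>1 * (8 * r * (norm (u, V) * norm (wU, wV)))"
    using assms(1) by (rule mult_left_mono)
  show ?thesis
    using add_mono[OF quadratic linear] unfolding L2_def r_def by (simp add: algebra_simps)
qed

lemma lipschitz_onI_inner:
  fixes g :: "'a::metric_space \<Rightarrow> 'b::real_inner"
  assumes "0 \<le> L" and "\<And>x y w. x \<in> S \<Longrightarrow> y \<in> S \<Longrightarrow> g y \<bullet> w - g x \<bullet> w \<le> L * dist x y * norm w"
  shows "lipschitz_on L S g"
proof (rule lipschitz_onI[OF _ assms(1)])
  fix x y assume "x \<in> S" "y \<in> S"
  define w where "w = g y - g x"
  have "norm w * norm w = w \<bullet> w"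
    by (simp flip: power2_eq_square power2_norm_eq_inner)
  also have "\<dots> = g y \<bullet> w - g x \<bullet> w"
    unfolding w_def by (rule inner_diff_left)
  also have "\<dots> \<le> L * dist x y * norm w"
    using assms(2)[OF \<open>x \<in> S\<close> \<open>y \<in> S\<close>] .
  finally have "norm w * norm w \<le> L * dist x y * norm w" .
  then have "norm w \<le> L * dist x y"
    using assms(1) by (cases "norm w = 0") simp_all
  then show "dist (g x) (g y) \<le> L * dist x y"
    by (simp add: w_def dist_norm norm_minus_commute)
qed

lemma abs_inner_hnet_grad_le:
  assumes \<sigma>': "\<And>x. \<bar>\<sigma>' x\<bar> \<le> \<sigma>1"
    and X: "\<And>t. norm (X t) \<le> 1" and q: "norm q \<le> 1" and U: "norm U \<le> B"
  shows "\<bar>hnet_grad \<sigma>' X q (U, W) \<bullet> (u, V)\<bar> \<le> \<sigma>1 * (norm u + B * norm V)"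
proof -
  have "\<bar>U \<bullet> X t\<bar> \<le> B" for t
    using abs_inner_le_norm[OF X] U by (rule order_trans)
  then have "\<bar>wmean (attn_weights X q W) (\<lambda>t. u \<bullet> X t)
      + wcov (attn_weights X q W) (\<lambda>t. U \<bullet> X t) (\<lambda>t. X t \<bullet> (V *v q))\<bar> \<le> norm u + B * norm V"
    unfolding attn_weights_def
    by (intro abs_wmean_add_wcov_le abs_inner_le_norm abs_inner_matrix_vector_mult_le_norm
        X q less_imp_le[OF softmax_pos] sum_softmax)
  then show ?thesis
    unfolding inner_hnet_grad by (intro abs_mult_le_mult \<sigma>')
qed

lemma hnet_lipschitz_on:
  fixes X :: "'t::finite \<Rightarrow> real^'d"
  assumes \<sigma>: "\<And>x. (\<sigma> has_real_derivative \<sigma>' x) (at x)" and \<sigma>': "\<And>x. \<bar>\<sigma>' x\<bar> \<le> \<sigma>1"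
    and X: "\<And>t. norm (X t) \<le> 1" and q: "norm q \<le> 1"
    and S: "convex S" and U: "\<And>\<theta>. \<theta> \<in> S \<Longrightarrow> norm (fst \<theta>) \<le> B"
  shows "lipschitz_on (L1 \<sigma>1 B) S (hnet \<sigma> X q)"
proof (rule lipschitz_onI)
  have \<sigma>1: "0 \<le> \<sigma>1"
    using \<sigma>'[of 0] by linarith
  then show "0 \<le> L1 \<sigma>1 B"
    unfolding L1_def by simp
  fix x y assume "x \<in> S" "y \<in> S"
  have "norm (hnet \<sigma> X q y - hnet \<sigma> X q x) \<le> L1 \<sigma>1 B * norm (y - x)"
  proof (rule differentiable_bound[OF S])
    show "(hnet \<sigma> X q has_derivative (\<lambda>v. hnet_grad \<sigma>' X q \<theta> \<bullet> v)) (at \<theta> within S)" for \<theta>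
      using hnet_has_derivative[OF \<sigma>] by (rule has_derivative_at_withinI)
    show "onorm (\<lambda>v. hnet_grad \<sigma>' X q \<theta> \<bullet> v) \<le> L1 \<sigma>1 B" if "\<theta> \<in> S" for \<theta>
    proof (rule onorm_bound)
      show "0 \<le> L1 \<sigma>1 B"
        unfolding L1_def using \<sigma>1 by simp
      fix v :: "(real^'d) \<times> (real^'d^'d)"
      have "\<bar>hnet_grad \<sigma>' X q (fst \<theta>, snd \<theta>) \<bullet> (fst v, snd v)\<bar> \<le> \<sigma>1 * (norm (fst v) + B * norm (snd v))"
        using abs_inner_hnet_grad_le[OF \<sigma>' X q U[OF that]] .
      also have "\<dots> \<le> L1 \<sigma>1 B * norm (fst v, snd v)"
        using \<sigma>1 by (rule sigma1_bound_le_L1)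
      finally show "norm (hnet_grad \<sigma>' X q \<theta> \<bullet> v) \<le> L1 \<sigma>1 B * norm v"
        by simp
    qed
  qed fact+
  then show "dist (hnet \<sigma> X q x) (hnet \<sigma> X q y) \<le> L1 \<sigma>1 B * dist x y"
    by (simp add: dist_norm norm_minus_commute)
qed

lemma hnet_grad_lipschitz_on:
  fixes X :: "'t::finite \<Rightarrow> real^'d"
  assumes \<sigma>'': "\<And>x. (\<sigma>' has_real_derivative \<sigma>'' x) (at x)"
    and \<sigma>'_bound: "\<And>x. \<bar>\<sigma>' x\<bar> \<le> \<sigma>1" and \<sigma>''_bound: "\<And>x. \<bar>\<sigma>'' x\<bar> \<le> \<sigma>2"
    and X: "\<And>t. norm (X t) \<le> 1" and q: "norm q \<le> 1"
    and S: "convex S" and U: "\<And>\<theta>. \<theta> \<in> S \<Longrightarrow> norm (fst \<theta>) \<le> B"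
  shows "lipschitz_on (L2 \<sigma>1 \<sigma>2 B) S (hnet_grad \<sigma>' X q)"
proof (rule lipschitz_onI_inner)
  have \<sigma>1: "0 \<le> \<sigma>1" and \<sigma>2: "0 \<le> \<sigma>2"
    using \<sigma>'_bound[of 0] \<sigma>''_bound[of 0] by linarith+
  then show "0 \<le> L2 \<sigma>1 \<sigma>2 B"
    unfolding L2_def by simp
  fix x y and w :: "(real^'d) \<times> (real^'d^'d)"
  assume "x \<in> S" "y \<in> S"
  obtain U1 W1 where x: "x = (U1, W1)"
    by (cases x)
  obtain u V where d: "y - x = (u, V)"
    by (cases "y - x")
  obtain wU wV where w: "w = (wU, wV)"
    by (cases w)
  have "0 \<le> B"
    using U[OF \<open>x \<in> S\<close>] norm_ge_zero order_trans by blast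
  have line: "\<bar>U1 \<bullet> X t + s * (u \<bullet> X t)\<bar> \<le> B" if "0 \<le> s" "s \<le> 1" for s t
  proof -
    have "x + s *\<^sub>R (y - x) \<in> S"
      using convexD_alt[OF S \<open>x \<in> S\<close> \<open>y \<in> S\<close>, of s] that by (simp add: algebra_simps)
    from U[OF this] have "norm (U1 + s *\<^sub>R u) \<le> B"
      unfolding d by (simp add: x)
    then show ?thesis
      using abs_inner_le_norm[OF X, of "U1 + s *\<^sub>R u" t] by (simp add: inner_add_left)
  qed
  have endpoints: "x = (U1, W1) + 0 *\<^sub>R (u, V)" "y = (U1, W1) + 1 *\<^sub>R (u, V)"
    using d by (auto simp: x simp flip: d)
  have "hnet_grad \<sigma>' X q y \<bullet> w - hnet_grad \<sigma>' X q x \<bullet> w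
      \<le> \<sigma>2 * (norm u + B * norm V) * (norm wU + B * norm wV)
         + \<sigma>1 * (norm wU * norm V + norm u * norm wV + 4 * B * norm wV * norm V)"
    unfolding endpoints w inner_hnet_grad_line
    by (rule order_trans[OF abs_ge_self abs_sigma'_tilted_line_diff_le[OF \<sigma>'' \<sigma>'_bound \<sigma>''_bound]])
      (auto intro: abs_inner_le_norm abs_inner_matrix_vector_mult_le_norm X q line)
  also have "\<dots> \<le> L2 \<sigma>1 \<sigma>2 B * norm (u, V) * norm (wU, wV)"
    using \<sigma>1 \<sigma>2 \<open>0 \<le> B\<close> by (rule sigma2_sigma1_bound_le_L2)
  finally show "hnet_grad \<sigma>' X q y \<bullet> w - hnet_grad \<sigma>' X q x \<bullet> w \<le> L2 \<sigma>1 \<sigma>2 B * dist x y * norm w"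
    by (simp add: dist_norm norm_minus_commute[of x y] d w)
qed

theorem lemma2:
  fixes \<sigma> \<sigma>' \<sigma>'' :: "real \<Rightarrow> real"
    and \<sigma>0 \<sigma>1 \<sigma>2 \<rho>u \<rho>w \<delta>' :: real
    and m :: nat
    and X :: "'t::finite \<Rightarrow> real^'d"
    and q :: "real^'d"
    and U0 :: "nat \<Rightarrow> real^'d"
    and W0 :: "nat \<Rightarrow> real^'d^'d"
  assumes sig_d1: "\<And>x. (\<sigma> has_real_derivative \<sigma>' x) (at x)"
    and sig_d2: "\<And>x. (\<sigma>' has_real_derivative \<sigma>'' x) (at x)"
    and sig_b0: "\<And>x. \<bar>\<sigma> x\<bar> \<le> \<sigma>0"
    and sig_b1: "\<And>x. \<bar>\<sigma>' x\<bar> \<le> \<sigma>1"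
    and sig_b2: "\<And>x. \<bar>\<sigma>'' x\<bar> \<le> \<sigma>2"
    and m_even: "even m"
    and rho_pos: "\<rho>u > 0" "\<rho>w > 0"
    and delta: "0 < \<delta>'" "\<delta>' < 1"
    and X_bd: "\<And>t. norm (X t) \<le> 1"
    and q_bd: "norm q \<le> 1"
    and event: "\<forall>i<m. norm (U0 i) \<le> sqrt (real CARD('d)) + sqrt (2 * ln (real m / (2 * \<delta>')))"
  shows "\<forall>i<m.
     (let S = {(U, W). norm (U - U0 i) \<le> \<rho>u / sqrt (real m) \<and> norm (W - W0 i) \<le> \<rho>w / sqrt (real m)};
          B = B_U CARD('d) m \<rho>u \<delta>'
      in lipschitz_on (L1 \<sigma>1 B) S (hnet \<sigma> X q)
         \<and> (\<exists>g. (\<forall>\<theta>\<in>S. (hnet \<sigma> X q has_derivative (\<lambda>v. g \<theta> \<bullet> v)) (at \<theta>))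
                 \<and> lipschitz_on (L2 \<sigma>1 \<sigma>2 B) S g))"
proof -
  have "lipschitz_on (L1 \<sigma>1 B) S (hnet \<sigma> X q)
      \<and> (\<exists>g. (\<forall>\<theta>\<in>S. (hnet \<sigma> X q has_derivative (\<lambda>v. g \<theta> \<bullet> v)) (at \<theta>))
              \<and> lipschitz_on (L2 \<sigma>1 \<sigma>2 B) S g)"
    if "i < m"
      and S_def: "S = {(U, W). norm (U - U0 i) \<le> \<rho>u / sqrt (real m) \<and> norm (W - W0 i) \<le> \<rho>w / sqrt (real m)}"
      and B_def: "B = B_U CARD('d) m \<rho>u \<delta>'" for i S B
  proof -
    have "S = cball (U0 i) (\<rho>u / sqrt (real m)) \<times> cball (W0 i) (\<rho>w / sqrt (real m))"
      unfolding S_def by (auto simp: dist_norm norm_minus_commute)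
    then have "convex S"
      by (simp add: convex_Times)
    have "norm (fst \<theta>) \<le> B" if "\<theta> \<in> S" for \<theta>
    proof -
      have "norm (fst \<theta> - U0 i) \<le> \<rho>u / sqrt (real m)"
        using that unfolding S_def by auto
      then show ?thesis
        using event[rule_format, OF \<open>i < m\<close>] norm_triangle_sub[of "fst \<theta>" "U0 i"]
        unfolding B_def B_U_def by linarith
    qed
    with \<open>convex S\<close> show ?thesis
      using hnet_has_derivative[OF sig_d1]
      by (auto intro!: exI[of _ "hnet_grad \<sigma>' X q"] hnet_lipschitz_on[OF sig_d1 sig_b1 X_bd q_bd]
          hnet_grad_lipschitz_on[OF sig_d2 sig_b1 sig_b2 X_bd q_bd])
  qed
  then show ?thesis
    by (simp add: Let_def)
qed

end
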